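(* Let $X$ be a space such that $\mathsf{EC}(X,\mathbb{R})$ holds. If $X$ is either normal, or Tychonoff and $\aleph_1$-strongly collectionwise Hausdorff, then $X$ is $\omega_1$-compact.
   Context: All spaces are Hausdorff and maps continuous. For a non-Lindelöf space $X$ and a space $Y$, $\mathsf{EC}(X,Y)$ means: for every continuous $f:X\to Y$ there is a Lindelöf $Z\subset X$ such that $f(X\setminus Z)$ is a singleton (for Lindelöf $X$ the property is regarded as trivially true). A space is $\aleph_1$-strongly collectionwise Hausdorff if every closed discrete subset $\{x_\alpha:\alpha<\lambda\}$ with $\lambda\le\aleph_1$ can be expanded to a discrete collection of open sets $\{U_\alpha\}$ with $x_\alpha\in U_\alpha$. A space is $\omega_1$-compact if every closed discrete subspace is countable. *)

theory Defs
  imports "HOL-Analysis.Analysis"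
begin

definition EC :: "'a topology \<Rightarrow> 'b topology \<Rightarrow> bool" where
  "EC X Y \<longleftrightarrow>
     (\<not> Lindelof_space X \<longrightarrow>
       (\<forall>f. continuous_map X Y f \<longrightarrow>
          (\<exists>Z. Z \<subseteq> topspace X \<and> Lindelof_space (subtopology X Z) \<and>
               (\<exists>y. f ` (topspace X - Z) = {y}))))"

definition closed_discrete_in :: "'a topology \<Rightarrow> 'a set \<Rightarrow> bool" where
  "closed_discrete_in X D \<longleftrightarrow> closedin X D \<and> subtopology X D = discrete_topology D"

definition discrete_family :: "'a topology \<Rightarrow> 'i set \<Rightarrow> ('i \<Rightarrow> 'a set) \<Rightarrow> bool" where
  "discrete_family X I U \<longleftrightarrow>
     (\<forall>x\<in>topspace X. \<exists>V. openin X V \<and> x \<in> V \<and>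
        (\<forall>i\<in>I. \<forall>j\<in>I. U i \<inter> V \<noteq> {} \<longrightarrow> U j \<inter> V \<noteq> {} \<longrightarrow> i = j))"

definition aleph1_strongly_cwH :: "'a topology \<Rightarrow> bool" where
  "aleph1_strongly_cwH X \<longleftrightarrow>
     (\<forall>D. closed_discrete_in X D \<and> (card_of D, cardSuc natLeq) \<in> ordLeq \<longrightarrow>
        (\<exists>U. (\<forall>x\<in>D. openin X (U x) \<and> x \<in> U x) \<and> discrete_family X D U))"

definition omega1_compact :: "'a topology \<Rightarrow> bool" where
  "omega1_compact X \<longleftrightarrow> (\<forall>D. closed_discrete_in X D \<longrightarrow> countable D)"

end

theory Submission
  imports Defs
begin

unbundle cardinal_syntax

text \<open>Suppose X had an uncountable closed discrete set; shrink it to a set B of size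
  \<open>\<aleph>\<^sub>1\<close> and split B into two disjoint uncountable halves. Urysohn's lemma (in the
  normal case) or a sum of bump functions supported in a discrete open expansion of B (in the
  collectionwise Hausdorff case) gives a continuous real function that is 1 on one half and 0 on
  the other. By EC it is constant off a Lindelof subspace Z; but a closed discrete set meets a
  Lindelof subspace in a countable set, so both halves have points outside Z.\<close>

lemma countable_iff_card_of_ordLeq_natLeq: "countable A \<longleftrightarrow> |A| \<le>o natLeq"
proof -
  have "countable A \<longleftrightarrow> |A| \<le>o |UNIV::nat set|"
    unfolding countable_def card_of_ordLeq[symmetric] by auto
  then show ?thesis
    using card_of_nat ordLeq_ordIso_trans ordIso_symmetric by blast
qed

lemma uncountable_subset_card_cardSuc_natLeq:
  assumes "\<not> countable D"
  obtains B where "B \<subseteq> D" "\<not> countable B" "|B| \<le>o cardSuc natLeq"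
proof -
  have "natLeq <o |D|"
    using assms countable_iff_card_of_ordLeq_natLeq not_ordLeq_iff_ordLess
      natLeq_Well_order card_of_Well_order by blast
  then have "cardSuc natLeq \<le>o |D|"
    using cardSuc_ordLess_ordLeq natLeq_Card_order card_of_Card_order by blast
  moreover have aleph1: "|Field (cardSuc natLeq)| =o cardSuc natLeq"
    using card_of_Field_ordIso cardSuc_Card_order natLeq_Card_order by blast
  ultimately have "|Field (cardSuc natLeq)| \<le>o |D|"
    using ordIso_ordLeq_trans by blast
  then obtain B where B: "B \<subseteq> D" "|Field (cardSuc natLeq)| =o |B|"
    using internalize_card_of_ordLeq2 by metis
  then have iso: "|B| =o cardSuc natLeq"
    using ordIso_transitive[OF ordIso_symmetric[OF B(2)] aleph1] by blast
  have "\<not> countable B"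
  proof
    assume "countable B"
    then have "cardSuc natLeq \<le>o natLeq"
      using iso countable_iff_card_of_ordLeq_natLeq ordIso_symmetric ordIso_ordLeq_trans by blast
    then show False
      using cardSuc_greater natLeq_Card_order not_ordLess_ordLeq by blast
  qed
  with B(1) iso show thesis
    using ordIso_iff_ordLeq that by blast
qed

lemma uncountable_split:
  assumes "\<not> countable B"
  obtains A where "A \<subseteq> B" "\<not> countable A" "\<not> countable (B - A)"
proof -
  have "infinite B"
    using assms countable_finite by blast
  then have "|B \<times> B| =o |B|"
    by (rule card_of_Times_same_infinite)
  then obtain h where h: "bij_betw h (B \<times> B) B"
    using card_of_ordIso by blast
  then have inj: "inj_on h (B \<times> B)" and onto: "h ` (B \<times> B) = B"
    by (simp_all add: bij_betw_def)
  obtain b0 where "b0 \<in> B"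
    using infinite_imp_nonempty[OF \<open>infinite B\<close>] by blast
  moreover obtain b1 where "b1 \<in> B - {b0}"
    using \<open>infinite B\<close> infinite_imp_nonempty[of "B - {b0}"] by auto
  ultimately have b: "b0 \<in> B" "b1 \<in> B" "b0 \<noteq> b1"
    by auto
  have fibre_subset: "h ` ({b} \<times> B) \<subseteq> B" if "b \<in> B" for b
    using onto that by blast
  have fibre_uncountable: "\<not> countable (h ` ({b} \<times> B))" if "b \<in> B" for b
  proof
    assume "countable (h ` ({b} \<times> B))"
    moreover have "inj_on h ({b} \<times> B)"
      by (rule inj_on_subset[OF inj]) (use that in blast)
    ultimately have "countable ({b} \<times> B)"
      by (rule countable_image_inj_on)
    then have "countable (snd ` ({b} \<times> B))"
      by (rule countable_image)
    then show False
      using assms by (simp add: snd_image_times)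
  qed
  have "h ` ({b1} \<times> B) \<inter> h ` ({b0} \<times> B) = h ` (({b1} \<times> B) \<inter> ({b0} \<times> B))"
    by (rule inj_on_image_Int[OF inj, symmetric]) (use b in auto)
  also have "\<dots> = {}"
    using b(3) by auto
  finally have "h ` ({b1} \<times> B) \<subseteq> B - h ` ({b0} \<times> B)"
    using fibre_subset[OF b(2)] by blast
  then have "\<not> countable (B - h ` ({b0} \<times> B))"
    using fibre_uncountable[OF b(2)] by (meson countable_subset)
  with fibre_subset[OF b(1)] fibre_uncountable[OF b(1)] show thesis
    by (rule that)
qed

lemma closed_discrete_in_subset:
  assumes "closed_discrete_in X D" "B \<subseteq> D"
  shows "closed_discrete_in X B"
proof -
  have D: "closedin X D" "subtopology X D = discrete_topology D"
    using assms(1) unfolding closed_discrete_in_def by auto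
  then have "closedin X B"
    using assms(2) closedin_trans_full by (metis closedin_discrete_topology)
  moreover have "subtopology X B = discrete_topology B"
    using assms(2) D(2) subtopology_subtopology[of X D B] subtopology_discrete_topology
    by (metis inf.absorb_iff2)
  ultimately show ?thesis
    unfolding closed_discrete_in_def by blast
qed

lemma Lindelof_space_discrete_topology: "Lindelof_space (discrete_topology S) \<longleftrightarrow> countable S"
proof
  assume "Lindelof_space (discrete_topology S)"
  then obtain V where V: "countable V" "V \<subseteq> (\<lambda>x. {x}) ` S" "\<Union>V = S"
    using Lindelof_spaceD[of "discrete_topology S" "(\<lambda>x. {x}) ` S"] by auto
  then have "countable (\<Union>v\<in>V. v)"
    by (intro countable_UN) auto
  then show "countable S"
    using V(3) by simp
qed (simp add: countable_imp_Lindelof_space)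

lemma countable_closed_discrete_in_Lindelof:
  assumes "closed_discrete_in X D" "Lindelof_space (subtopology X Z)"
  shows "countable (Z \<inter> D)"
proof -
  have D: "closedin X D" "subtopology X D = discrete_topology D"
    using assms(1) unfolding closed_discrete_in_def by auto
  have "subtopology (subtopology X Z) (D \<inter> Z) = subtopology (subtopology X D) (Z \<inter> D)"
    by (simp add: subtopology_subtopology Int_ac)
  also have "\<dots> = discrete_topology (Z \<inter> D)"
    by (simp add: D(2) subtopology_discrete_topology Int_ac)
  finally have "subtopology (subtopology X Z) (D \<inter> Z) = discrete_topology (Z \<inter> D)" .
  moreover have "Lindelof_space (subtopology (subtopology X Z) (D \<inter> Z))"
    using D(1) assms(2) Lindelof_space_closedin_subtopology closedin_subtopology by blast
  ultimately show ?thesis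
    by (simp add: Lindelof_space_discrete_topology)
qed

lemma continuous_map_locally_eq:
  assumes "\<And>x. x \<in> topspace X \<Longrightarrow>
             \<exists>V k. openin X V \<and> x \<in> V \<and> continuous_map X Y k \<and> (\<forall>z\<in>V. g z = k z)"
  shows "continuous_map X Y g"
proof -
  obtain V k where Vk: "\<And>x. x \<in> topspace X \<Longrightarrow>
      openin X (V x) \<and> x \<in> V x \<and> continuous_map X Y (k x) \<and> (\<forall>z\<in>V x. g z = k x z)"
    using assms by metis
  show ?thesis
  proof (rule pasting_lemma[where I = "topspace X" and T = V and f = k])
    fix i j x
    assume "i \<in> topspace X" "j \<in> topspace X" "x \<in> topspace X \<inter> V i \<inter> V j"
    then have "g x = k i x" "g x = k j x"
      using Vk[of i] Vk[of j] by auto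
    then show "k i x = k j x"
      by simp
  qed (use Vk in \<open>auto intro: continuous_map_from_subtopology\<close>)
qed

lemma discrete_familyD:
  assumes "discrete_family X I U" "x \<in> topspace X"
  obtains V where "openin X V" "x \<in> V"
    "\<And>i j. \<lbrakk>i \<in> I; j \<in> I; U i \<inter> V \<noteq> {}; U j \<inter> V \<noteq> {}\<rbrakk> \<Longrightarrow> i = j"
proof -
  have "\<exists>V. openin X V \<and> x \<in> V \<and>
      (\<forall>i\<in>I. \<forall>j\<in>I. U i \<inter> V \<noteq> {} \<longrightarrow> U j \<inter> V \<noteq> {} \<longrightarrow> i = j)"
    using assms unfolding discrete_family_def by (rule bspec)
  then obtain V where "openin X V" "x \<in> V"
      "\<forall>i\<in>I. \<forall>j\<in>I. U i \<inter> V \<noteq> {} \<longrightarrow> U j \<inter> V \<noteq> {} \<longrightarrow> i = j"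
    by (elim exE conjE)
  then show thesis
    using that by simp
qed

lemma discrete_family_subset:
  assumes "discrete_family X I U" "J \<subseteq> I"
  shows "discrete_family X J U"
  unfolding discrete_family_def
proof
  fix x assume "x \<in> topspace X"
  then obtain V where "openin X V" "x \<in> V"
    "\<And>i j. \<lbrakk>i \<in> I; j \<in> I; U i \<inter> V \<noteq> {}; U j \<inter> V \<noteq> {}\<rbrakk> \<Longrightarrow> i = j"
    using discrete_familyD[OF assms(1)] by metis
  with assms(2) show "\<exists>V. openin X V \<and> x \<in> V \<and>
      (\<forall>i\<in>J. \<forall>j\<in>J. U i \<inter> V \<noteq> {} \<longrightarrow> U j \<inter> V \<noteq> {} \<longrightarrow> i = j)"
    by (meson subsetD)
qed

lemma discrete_family_unique:
  assumes "discrete_family X I U" "x \<in> topspace X" "i \<in> I" "j \<in> I" "x \<in> U i" "x \<in> U j"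
  shows "i = j"
  using assms unfolding discrete_family_def by blast

lemma continuous_map_sum_discrete_family:
  fixes h :: "'i \<Rightarrow> 'a \<Rightarrow> 'b::real_normed_vector"
  assumes U: "discrete_family X I U"
    and h: "\<And>i. i \<in> I \<Longrightarrow> continuous_map X euclidean (h i)"
    and h0: "\<And>i x. \<lbrakk>i \<in> I; x \<in> topspace X; x \<notin> U i\<rbrakk> \<Longrightarrow> h i x = 0"
  shows "continuous_map X euclidean (\<lambda>x. \<Sum>i\<in>{i\<in>I. x \<in> U i}. h i x)"
proof (rule continuous_map_locally_eq)
  fix y assume "y \<in> topspace X"
  then obtain V where V: "openin X V" "y \<in> V"
    and single: "\<And>i j. \<lbrakk>i \<in> I; j \<in> I; U i \<inter> V \<noteq> {}; U j \<inter> V \<noteq> {}\<rbrakk> \<Longrightarrow> i = j"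
    using discrete_familyD[OF U] by metis
  define J where "J = {i\<in>I. U i \<inter> V \<noteq> {}}"
  have "finite J"
  proof (cases "J = {}")
    case False
    then obtain i where "i \<in> J"
      by blast
    then have "J \<subseteq> {i}"
      using single unfolding J_def by blast
    then show ?thesis
      by (rule finite_subset) simp
  qed simp
  have "(\<Sum>i\<in>{i\<in>I. z \<in> U i}. h i z) = (\<Sum>i\<in>J. h i z)" if "z \<in> V" for z
  proof (rule sum.mono_neutral_left[OF \<open>finite J\<close>])
    show "{i\<in>I. z \<in> U i} \<subseteq> J"
      using that unfolding J_def by blast
    show "\<forall>i\<in>J - {i\<in>I. z \<in> U i}. h i z = 0"
      using that V(1) openin_subset h0 unfolding J_def by blast
  qed
  moreover have "continuous_map X euclidean (\<lambda>z. \<Sum>i\<in>J. h i z)"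
    using \<open>finite J\<close> h unfolding J_def by (intro continuous_map_sum) auto
  ultimately show "\<exists>V k. openin X V \<and> y \<in> V \<and> continuous_map X euclidean k \<and>
                         (\<forall>z\<in>V. (\<Sum>i\<in>{i\<in>I. z \<in> U i}. h i z) = k z)"
    using V by blast
qed

lemma completely_regular_space_bump:
  assumes "completely_regular_space X" "openin X U" "x \<in> U"
  obtains h where "continuous_map X euclideanreal h" "h x = 1" "\<And>z. z \<in> topspace X - U \<Longrightarrow> h z = 0"
proof -
  obtain g where g: "continuous_map X euclideanreal g" "g x = 0" "g ` (topspace X - U) \<subseteq> {1}"
    using assms unfolding completely_regular_space_alt' by blast
  show thesis
    by (rule that[of "\<lambda>z. 1 - g z"]) (use g in \<open>auto intro: continuous_intros\<close>)
qed

lemma discrete_expansion_separating_function: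
  assumes X: "completely_regular_space X"
    and U: "\<And>x. x \<in> B \<Longrightarrow> openin X (U x) \<and> x \<in> U x" "discrete_family X B U"
    and "A \<subseteq> B"
  obtains f where "continuous_map X euclideanreal f" "\<And>x. x \<in> A \<Longrightarrow> f x = 1"
    "\<And>x. x \<in> B - A \<Longrightarrow> f x = 0"
proof -
  have "\<exists>g. continuous_map X euclideanreal g \<and> g x = 1 \<and> (\<forall>z\<in>topspace X - U x. g z = 0)"
    if "x \<in> A" for x
  proof -
    have "openin X (U x)" "x \<in> U x"
      using U(1) that \<open>A \<subseteq> B\<close> by auto
    then show ?thesis
      using completely_regular_space_bump[OF X] by metis
  qed
  then obtain h where h: "\<And>x. x \<in> A \<Longrightarrow> continuous_map X euclideanreal (h x) \<and> h x x = 1 \<and>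
                       (\<forall>z\<in>topspace X - U x. h x z = 0)"
    by metis
  have Btop: "x \<in> topspace X" if "x \<in> B" for x
    using U(1)[OF that] by (meson openin_subset subsetD)
  have index: "{i\<in>A. x \<in> U i} = (if x \<in> A then {x} else {})" if "x \<in> B" for x
    using discrete_family_unique[OF U(2) Btop[OF that]] U(1) that \<open>A \<subseteq> B\<close> by auto
  show thesis
  proof (rule that)
    show "continuous_map X euclideanreal (\<lambda>x. \<Sum>i\<in>{i\<in>A. x \<in> U i}. h i x)"
      using discrete_family_subset[OF U(2) \<open>A \<subseteq> B\<close>] h
      by (intro continuous_map_sum_discrete_family) auto
  qed (use index h \<open>A \<subseteq> B\<close> in auto)
qed

lemma closed_discrete_separating_function:
  assumes "normal_space X \<or> (completely_regular_space X \<and> aleph1_strongly_cwH X)"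
    and B: "closed_discrete_in X B" "|B| \<le>o cardSuc natLeq"
    and "A \<subseteq> B"
  obtains f where "continuous_map X euclideanreal f" "\<And>x. x \<in> A \<Longrightarrow> f x = 1"
    "\<And>x. x \<in> B - A \<Longrightarrow> f x = 0"
  using assms(1)
proof
  assume "normal_space X"
  moreover have "closedin X (B - A)" "closedin X A"
    using closed_discrete_in_subset[OF B(1)] \<open>A \<subseteq> B\<close> unfolding closed_discrete_in_def by auto
  moreover have "disjnt (B - A) A"
    unfolding disjnt_def by blast
  ultimately obtain f where "continuous_map X (top_of_set {0..1}) f" "f ` (B - A) \<subseteq> {0}"
      "f ` A \<subseteq> {1::real}"
    using Urysohn_lemma[of X "B - A" A 0 1] by auto
  then show thesis
    using that continuous_map_in_subtopology by (metis image_subset_iff singletonD)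
next
  assume "completely_regular_space X \<and> aleph1_strongly_cwH X"
  then show thesis
    using B \<open>A \<subseteq> B\<close> that discrete_expansion_separating_function
    unfolding aleph1_strongly_cwH_def by metis
qed

lemma EC_closed_discrete_constant_off_countable:
  assumes "EC X Y" "closed_discrete_in X D" "continuous_map X Y f"
  obtains C y where "countable C" "\<And>x. x \<in> D - C \<Longrightarrow> f x = y"
proof (cases "Lindelof_space X")
  case True
  then have "countable (topspace X \<inter> D)"
    using countable_closed_discrete_in_Lindelof[OF assms(2), of "topspace X"] by simp
  then show thesis
    using that[of "topspace X \<inter> D"] assms(2) closedin_subset
    unfolding closed_discrete_in_def by blast
next
  case False
  then obtain Z y where Z: "Lindelof_space (subtopology X Z)" "f ` (topspace X - Z) = {y}"
    using assms(1,3) unfolding EC_def by blast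
  have "D \<subseteq> topspace X"
    using assms(2) closedin_subset unfolding closed_discrete_in_def by blast
  then show thesis
    using that[of "Z \<inter> D" y] countable_closed_discrete_in_Lindelof[OF assms(2) Z(1)] Z(2) by blast
qed

theorem theorem3p4:
  fixes X :: "'a topology"
  assumes "Hausdorff_space X"
    and "EC X euclideanreal"
    and "normal_space X \<or> (completely_regular_space X \<and> aleph1_strongly_cwH X)"
  shows "omega1_compact X"
  unfolding omega1_compact_def
proof (intro allI impI, rule ccontr)
  fix D assume D: "closed_discrete_in X D" "\<not> countable D"
  obtain B where B: "B \<subseteq> D" "\<not> countable B" "|B| \<le>o cardSuc natLeq"
    using uncountable_subset_card_cardSuc_natLeq[OF D(2)] .
  obtain A where A: "A \<subseteq> B" "\<not> countable A" "\<not> countable (B - A)"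
    using uncountable_split[OF B(2)] .
  obtain f where f: "continuous_map X euclideanreal f" "\<And>x. x \<in> A \<Longrightarrow> f x = 1"
    "\<And>x. x \<in> B - A \<Longrightarrow> f x = 0"
    using closed_discrete_separating_function[OF assms(3) closed_discrete_in_subset[OF D(1) B(1)] B(3) A(1)]
    by metis
  obtain C y where C: "countable C" "\<And>x. x \<in> D - C \<Longrightarrow> f x = y"
    using EC_closed_discrete_constant_off_countable[OF assms(2) D(1) f(1)] by metis
  obtain a where "a \<in> A - C"
    using uncountable_minus_countable[OF A(2) C(1)] by (metis countable_empty equals0I)
  moreover obtain b where "b \<in> (B - A) - C"
    using uncountable_minus_countable[OF A(3) C(1)] by (metis countable_empty equals0I)
  ultimately have "f a = y" "f b = y"
    using C(2) A(1) B(1) by auto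
  then show False
    using f(2,3) \<open>a \<in> A - C\<close> \<open>b \<in> (B - A) - C\<close> by force
qed

end
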